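(* Let $P$ be a finite poset. Then $N_{diag}(S_N(P))=A(P)$.
   Context: For a poset $P$, $x\prec y$ means $x<y$ with no $z$ satisfying $x<z<y$; $\mathrm{Diag}(P)$ is the set of covering pairs $(x,y)$, and $\mathrm{Inc}(P)$ the set of pairs of incomparable elements. Four elements $a,b,c,d$ form an $N$ in $P$ if $b\prec c$, $a\prec c$, $b\prec d$ and $(a,d)\in\mathrm{Inc}(P)$; $(b,c)$ is the diagonal edge of this $N$. $N_{diag}(P)$ is the set of diagonal edges of all $N$'s in $P$. $S_N(P)$ is the poset obtained from $P$ by adding one new (dummy) vertex $u$ on each edge $(b,c)\in N_{diag}(P)$ (so that $b\prec u\prec c$), with the induced order. $A(P)$ is the set of pairs $(b,c)\in\mathrm{Diag}(P)\setminus N_{diag}(P)$ for which there exist $a,d\in P$ with $a<c$, $b<d$, $(a,b),(c,d)\in\mathrm{Inc}(P)$, and either $(a,c)\in N_{diag}(P)$ or $(b,d)\in N_{diag}(P)$. *)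

theory Defs
  imports Main
begin

definition poset_on :: "'a set \<Rightarrow> ('a \<Rightarrow> 'a \<Rightarrow> bool) \<Rightarrow> bool" where
  "poset_on V le \<longleftrightarrow>
     (\<forall>x\<in>V. le x x) \<and>
     (\<forall>x\<in>V. \<forall>y\<in>V. le x y \<and> le y x \<longrightarrow> x = y) \<and>
     (\<forall>x\<in>V. \<forall>y\<in>V. \<forall>z\<in>V. le x y \<and> le y z \<longrightarrow> le x z)"

definition lt :: "('a \<Rightarrow> 'a \<Rightarrow> bool) \<Rightarrow> 'a \<Rightarrow> 'a \<Rightarrow> bool" where
  "lt le x y \<longleftrightarrow> le x y \<and> x \<noteq> y"

definition covers :: "'a set \<Rightarrow> ('a \<Rightarrow> 'a \<Rightarrow> bool) \<Rightarrow> 'a \<Rightarrow> 'a \<Rightarrow> bool" where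
  "covers V le x y \<longleftrightarrow> x \<in> V \<and> y \<in> V \<and> lt le x y \<and>
     \<not> (\<exists>z\<in>V. lt le x z \<and> lt le z y)"

definition Diag :: "'a set \<Rightarrow> ('a \<Rightarrow> 'a \<Rightarrow> bool) \<Rightarrow> ('a \<times> 'a) set" where
  "Diag V le = {(x, y). covers V le x y}"

definition Inc :: "'a set \<Rightarrow> ('a \<Rightarrow> 'a \<Rightarrow> bool) \<Rightarrow> ('a \<times> 'a) set" where
  "Inc V le = {(x, y). x \<in> V \<and> y \<in> V \<and> \<not> le x y \<and> \<not> le y x}"

definition is_N :: "'a set \<Rightarrow> ('a \<Rightarrow> 'a \<Rightarrow> bool) \<Rightarrow> 'a \<Rightarrow> 'a \<Rightarrow> 'a \<Rightarrow> 'a \<Rightarrow> bool" where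
  "is_N V le a b c d \<longleftrightarrow> covers V le b c \<and> covers V le a c \<and> covers V le b d \<and>
     (a, d) \<in> Inc V le"

definition Ndiag :: "'a set \<Rightarrow> ('a \<Rightarrow> 'a \<Rightarrow> bool) \<Rightarrow> ('a \<times> 'a) set" where
  "Ndiag V le = {(b, c). \<exists>a d. is_N V le a b c d}"

text \<open>S_N(P): original elements are Inl x, the dummy vertex on the edge (b,c) is Inr (b,c).
  The order is the order generated by the order of P together with b < u < c.\<close>

definition SN_carrier :: "'a set \<Rightarrow> ('a \<Rightarrow> 'a \<Rightarrow> bool) \<Rightarrow> ('a + 'a \<times> 'a) set" where
  "SN_carrier V le = Inl ` V \<union> Inr ` Ndiag V le"

definition SN_gen :: "'a set \<Rightarrow> ('a \<Rightarrow> 'a \<Rightarrow> bool) \<Rightarrow> ('a + 'a \<times> 'a) \<Rightarrow> ('a + 'a \<times> 'a) \<Rightarrow> bool" where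
  "SN_gen V le x y \<longleftrightarrow>
     (\<exists>a\<in>V. \<exists>b\<in>V. le a b \<and> x = Inl a \<and> y = Inl b) \<or>
     (\<exists>b c. (b, c) \<in> Ndiag V le \<and> x = Inl b \<and> y = Inr (b, c)) \<or>
     (\<exists>b c. (b, c) \<in> Ndiag V le \<and> x = Inr (b, c) \<and> y = Inl c)"

definition SN_le :: "'a set \<Rightarrow> ('a \<Rightarrow> 'a \<Rightarrow> bool) \<Rightarrow> ('a + 'a \<times> 'a) \<Rightarrow> ('a + 'a \<times> 'a) \<Rightarrow> bool" where
  "SN_le V le = (SN_gen V le)\<^sup>*\<^sup>*"

definition A_set :: "'a set \<Rightarrow> ('a \<Rightarrow> 'a \<Rightarrow> bool) \<Rightarrow> ('a \<times> 'a) set" where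
  "A_set V le = {(b, c). (b, c) \<in> Diag V le - Ndiag V le \<and>
     (\<exists>a\<in>V. \<exists>d\<in>V. lt le a c \<and> lt le b d \<and> (a, b) \<in> Inc V le \<and> (c, d) \<in> Inc V le \<and>
        ((a, c) \<in> Ndiag V le \<or> (b, d) \<in> Ndiag V le))}"

end

theory Submission
  imports Defs
begin

text \<open>Every element u of S_N(P) spans an interval [lower_end u, upper_end u] of P: a point for
  an original element, the subdivided N-diagonal for a dummy vertex. The order of S_N(P) is then
  u \<le> v iff u = v or upper_end u \<le> lower_end v, which makes its covers explicit: the covers of P
  that are not N-diagonals, and the two halves of every subdivided N-diagonal.
  A dummy vertex has a unique upper and a unique lower cover, so it lies on no N-diagonal of S_N(P).
  An N of S_N(P) with diagonal Inl \<beta> \<prec> Inl \<gamma> has its two other vertices over covers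
  \<alpha> \<prec> \<gamma> and \<beta> \<prec> \<delta> of P, and \<alpha>, \<beta>, \<gamma>, \<delta> would be an N of P with diagonal (\<beta>, \<gamma>)
  unless (\<alpha>, \<gamma>) or (\<beta>, \<delta>) is subdivided; this is membership in A(P). Conversely, the witnesses
  of A(P) can be shrunk to covers because P is finite.\<close>

lemma coversD: "covers V le x y \<Longrightarrow> x \<in> V \<and> y \<in> V \<and> le x y \<and> x \<noteq> y"
  unfolding covers_def lt_def by blast

lemma covers_common_upper_Inc:
  assumes "covers V le a c" "covers V le b c" "a \<noteq> b"
  shows "(a, b) \<in> Inc V le"
  using assms unfolding covers_def lt_def Inc_def by blast

lemma covers_common_lower_Inc:
  assumes "covers V le b c" "covers V le b d" "c \<noteq> d"
  shows "(c, d) \<in> Inc V le"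
  using assms unfolding covers_def lt_def Inc_def by blast

lemma is_N_distinct: "is_N V le a b c d \<Longrightarrow> a \<noteq> b \<and> c \<noteq> d"
  unfolding is_N_def covers_def lt_def Inc_def by blast

lemma Ndiag_covers: "(b, c) \<in> Ndiag V le \<Longrightarrow> covers V le b c"
  unfolding Ndiag_def is_N_def by blast

lemma SN_carrier_simps [simp]:
  "Inl x \<in> SN_carrier V le \<longleftrightarrow> x \<in> V"
  "Inr e \<in> SN_carrier V le \<longleftrightarrow> e \<in> Ndiag V le"
  unfolding SN_carrier_def by auto

fun lower_end :: "'a + 'a \<times> 'a \<Rightarrow> 'a" where
  "lower_end (Inl x) = x"
| "lower_end (Inr (b, c)) = b"

fun upper_end :: "'a + 'a \<times> 'a \<Rightarrow> 'a" where
  "upper_end (Inl x) = x"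
| "upper_end (Inr (b, c)) = c"

locale poset =
  fixes V :: "'a set" and le :: "'a \<Rightarrow> 'a \<Rightarrow> bool"
  assumes poset_on: "poset_on V le"
begin

lemma poset_refl: "x \<in> V \<Longrightarrow> le x x"
  using poset_on unfolding poset_on_def by blast

lemma poset_antisym: "x \<in> V \<Longrightarrow> y \<in> V \<Longrightarrow> le x y \<Longrightarrow> le y x \<Longrightarrow> x = y"
  using poset_on unfolding poset_on_def by blast

lemma poset_trans: "x \<in> V \<Longrightarrow> y \<in> V \<Longrightarrow> z \<in> V \<Longrightarrow> le x y \<Longrightarrow> le y z \<Longrightarrow> le x z"
  using poset_on unfolding poset_on_def by blast

lemma covers_squeeze:
  assumes "covers V le x y" "b \<in> V" "c \<in> V" "le x b" "lt le b c" "le c y"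
  shows "b = x \<and> c = y"
proof -
  note x_y = coversD[OF assms(1)]
  have "lt le b y" "lt le x c"
    using assms x_y poset_trans poset_antisym unfolding lt_def by metis+
  then show ?thesis
    using assms unfolding covers_def lt_def by blast
qed

lemma exists_cover_above:
  assumes "finite V" "b \<in> V" "d \<in> V" "lt le b d"
  shows "\<exists>c. covers V le b c \<and> le c d"
  using assms(3,4)
proof (induction "card {z\<in>V. lt le b z \<and> le z d}" arbitrary: d rule: less_induct)
  case (less d)
  show ?case
  proof (cases "covers V le b d")
    case True
    then show ?thesis using less.prems(1) poset_refl by blast
  next
    case False
    then obtain z where z: "z \<in> V" "lt le b z" "lt le z d"
      using less.prems assms(2) unfolding covers_def by blast
    let ?up = "\<lambda>t. {w\<in>V. lt le b w \<and> le w t}"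
    have "?up z \<subseteq> ?up d"
      using z(3) less.prems(1) poset_trans[OF _ z(1) less.prems(1)] unfolding lt_def by blast
    moreover have "d \<in> ?up d" "d \<notin> ?up z"
      using z less.prems poset_refl[of d] poset_antisym[of z d] unfolding lt_def by auto
    ultimately have "?up z \<subset> ?up d"
      by blast
    then have "card (?up z) < card (?up d)"
      using assms(1) by (simp add: psubset_card_mono)
    with less.hyps z obtain c where c: "covers V le b c" "le c z" by blast
    have "le c d"
      using poset_trans[of c z d] coversD[OF c(1)] c(2) z less.prems(1) unfolding lt_def by blast
    with c(1) show ?thesis by blast
  qed
qed

lemma exists_cover_below:
  assumes "finite V" "a \<in> V" "c \<in> V" "lt le a c"
  shows "\<exists>b. covers V le b c \<and> le a b"
proof -
  have "poset_on V (\<lambda>x y. le y x)"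
    using poset_on unfolding poset_on_def by blast
  then interpret dual: poset V "\<lambda>x y. le y x"
    by (rule poset.intro)
  have "lt (\<lambda>x y. le y x) c a"
    using assms(4) unfolding lt_def by blast
  then obtain b where "covers V (\<lambda>x y. le y x) c b" "le a b"
    using dual.exists_cover_above[OF assms(1,3,2)] by blast
  moreover have "covers V (\<lambda>x y. le y x) c b \<longleftrightarrow> covers V le b c"
    unfolding covers_def lt_def by blast
  ultimately show ?thesis
    by blast
qed

abbreviation V\<^sub>N :: "('a + 'a \<times> 'a) set" where
  "V\<^sub>N \<equiv> SN_carrier V le"

abbreviation le\<^sub>N :: "'a + 'a \<times> 'a \<Rightarrow> 'a + 'a \<times> 'a \<Rightarrow> bool" where
  "le\<^sub>N \<equiv> SN_le V le"

lemma SN_ends: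
  assumes "u \<in> V\<^sub>N"
  shows "lower_end u \<in> V" "upper_end u \<in> V" "le (lower_end u) (upper_end u)"
  using assms poset_refl coversD[OF Ndiag_covers] by (cases u; force)+

lemma SN_gen_ends:
  assumes "SN_gen V le u v"
  shows "u \<in> V\<^sub>N" "v \<in> V\<^sub>N" "le (upper_end u) (lower_end v)"
  using assms poset_refl coversD[OF Ndiag_covers] unfolding SN_gen_def by force+

lemma SN_le_iff:
  "le\<^sub>N u v \<longleftrightarrow> u = v \<or> (u \<in> V\<^sub>N \<and> v \<in> V\<^sub>N \<and> le (upper_end u) (lower_end v))"
proof
  assume "le\<^sub>N u v"
  then show "u = v \<or> (u \<in> V\<^sub>N \<and> v \<in> V\<^sub>N \<and> le (upper_end u) (lower_end v))"
    unfolding SN_le_def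
  proof (induction rule: rtranclp_induct)
    case (step v w)
    note vw = SN_gen_ends[OF step.hyps(2)]
    show ?case
    proof (cases "u = v")
      case False
      with step.IH have "u \<in> V\<^sub>N" "le (upper_end u) (lower_end v)" by auto
      then show ?thesis
        using vw SN_ends poset_trans by (metis (no_types, lifting))
    qed (use vw in simp)
  qed simp
next
  have to_lower: "le\<^sub>N (Inl (lower_end v)) v" if "v \<in> V\<^sub>N" for v
    using that unfolding SN_le_def SN_gen_def by (cases v) auto
  have from_upper: "le\<^sub>N u (Inl (upper_end u))" if "u \<in> V\<^sub>N" for u
    using that unfolding SN_le_def SN_gen_def by (cases u) auto
  have between: "le\<^sub>N (Inl x) (Inl y)" if "x \<in> V" "y \<in> V" "le x y" for x y
    using that unfolding SN_le_def SN_gen_def by auto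
  assume "u = v \<or> (u \<in> V\<^sub>N \<and> v \<in> V\<^sub>N \<and> le (upper_end u) (lower_end v))"
  then show "le\<^sub>N u v"
    using from_upper between to_lower SN_ends unfolding SN_le_def
    by (metis (no_types, lifting) rtranclp.rtrancl_refl rtranclp_trans)
qed

lemma SN_lt_iff:
  "lt le\<^sub>N u v \<longleftrightarrow> u \<noteq> v \<and> u \<in> V\<^sub>N \<and> v \<in> V\<^sub>N \<and> le (upper_end u) (lower_end v)"
  unfolding lt_def SN_le_iff by blast

lemma SN_Inc_iff:
  "(u, v) \<in> Inc V\<^sub>N le\<^sub>N \<longleftrightarrow> u \<in> V\<^sub>N \<and> v \<in> V\<^sub>N \<and> u \<noteq> v \<and>
     \<not> le (upper_end u) (lower_end v) \<and> \<not> le (upper_end v) (lower_end u)"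
  unfolding Inc_def SN_le_iff by blast

lemma SN_eq_Inl_if_squeezed:
  assumes "u \<in> V\<^sub>N" "x \<in> V" "le x (lower_end u)" "le (upper_end u) x"
  shows "u = Inl x"
proof -
  note ends = SN_ends[OF assms(1)]
  have "lower_end u = x"
    using poset_antisym[OF ends(1) assms(2)] poset_trans[OF ends(1,2) assms(2) ends(3) assms(4)]
      assms(3) by blast
  moreover have "upper_end u = x"
    using poset_antisym[OF ends(2) assms(2)] poset_trans[OF assms(2) ends(1,2) assms(3) ends(3)]
      assms(4) by blast
  ultimately show ?thesis
    using assms(1) by (cases u) (auto dest!: Ndiag_covers coversD)
qed

lemma SN_covers_Inl_Inl_iff:
  "covers V\<^sub>N le\<^sub>N (Inl x) (Inl y) \<longleftrightarrow> covers V le x y \<and> (x, y) \<notin> Ndiag V le"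
proof
  assume cov: "covers V\<^sub>N le\<^sub>N (Inl x) (Inl y)"
  then have "x \<in> V" "y \<in> V" "lt le x y"
    unfolding covers_def SN_lt_iff by (auto simp: lt_def)
  moreover have "\<not> (lt le x z \<and> lt le z y)" if "z \<in> V" for z
    using cov that unfolding covers_def SN_lt_iff by (force simp: lt_def)
  moreover have "(x, y) \<notin> Ndiag V le"
    using cov poset_refl \<open>x \<in> V\<close> \<open>y \<in> V\<close> unfolding covers_def SN_lt_iff by force
  ultimately show "covers V le x y \<and> (x, y) \<notin> Ndiag V le"
    unfolding covers_def by blast
next
  assume cov: "covers V le x y \<and> (x, y) \<notin> Ndiag V le"
  have "\<not> (lt le\<^sub>N (Inl x) z \<and> lt le\<^sub>N z (Inl y))" if "z \<in> V\<^sub>N" for z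
  proof (cases z)
    case (Inl w)
    then show ?thesis using cov that unfolding covers_def SN_lt_iff by (auto simp: lt_def)
  next
    case (Inr e)
    then obtain b c where z: "z = Inr (b, c)" by (cases e) blast
    with that have "b \<in> V" "c \<in> V" "lt le b c"
      by (auto simp: lt_def dest!: Ndiag_covers coversD)
    then show ?thesis
      using cov that covers_squeeze z unfolding SN_lt_iff by fastforce
  qed
  then show "covers V\<^sub>N le\<^sub>N (Inl x) (Inl y)"
    using cov coversD[of V le x y] unfolding covers_def SN_lt_iff by auto
qed

lemma SN_covers_Inl_Inr_iff:
  "covers V\<^sub>N le\<^sub>N (Inl x) (Inr (b, c)) \<longleftrightarrow> (b, c) \<in> Ndiag V le \<and> x = b"
proof
  assume cov: "covers V\<^sub>N le\<^sub>N (Inl x) (Inr (b, c))"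
  then have bc: "x \<in> V" "(b, c) \<in> Ndiag V le" "le x b"
    unfolding covers_def SN_lt_iff by auto
  have "b \<in> V"
    using bc by (auto dest!: Ndiag_covers coversD)
  moreover have "lt le\<^sub>N (Inl b) (Inr (b, c))"
    using bc \<open>b \<in> V\<close> poset_refl unfolding SN_lt_iff by auto
  ultimately have "\<not> lt le\<^sub>N (Inl x) (Inl b)"
    using cov unfolding covers_def by fastforce
  then show "(b, c) \<in> Ndiag V le \<and> x = b"
    using bc \<open>b \<in> V\<close> unfolding SN_lt_iff by auto
next
  assume bc: "(b, c) \<in> Ndiag V le \<and> x = b"
  then have "b \<in> V"
    by (auto dest!: Ndiag_covers coversD)
  have "\<not> (lt le\<^sub>N (Inl b) z \<and> lt le\<^sub>N z (Inr (b, c)))" if "z \<in> V\<^sub>N" for z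
    using SN_eq_Inl_if_squeezed[OF that \<open>b \<in> V\<close>] unfolding SN_lt_iff by auto
  then show "covers V\<^sub>N le\<^sub>N (Inl x) (Inr (b, c))"
    using bc \<open>b \<in> V\<close> poset_refl unfolding covers_def SN_lt_iff by auto
qed

lemma SN_covers_Inr_Inl_iff:
  "covers V\<^sub>N le\<^sub>N (Inr (b, c)) (Inl y) \<longleftrightarrow> (b, c) \<in> Ndiag V le \<and> y = c"
proof
  assume cov: "covers V\<^sub>N le\<^sub>N (Inr (b, c)) (Inl y)"
  then have bc: "y \<in> V" "(b, c) \<in> Ndiag V le" "le c y"
    unfolding covers_def SN_lt_iff by auto
  have "c \<in> V"
    using bc by (auto dest!: Ndiag_covers coversD)
  moreover have "lt le\<^sub>N (Inr (b, c)) (Inl c)"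
    using bc \<open>c \<in> V\<close> poset_refl unfolding SN_lt_iff by auto
  ultimately have "\<not> lt le\<^sub>N (Inl c) (Inl y)"
    using cov unfolding covers_def by fastforce
  then show "(b, c) \<in> Ndiag V le \<and> y = c"
    using bc \<open>c \<in> V\<close> unfolding SN_lt_iff by auto
next
  assume bc: "(b, c) \<in> Ndiag V le \<and> y = c"
  then have "c \<in> V"
    by (auto dest!: Ndiag_covers coversD)
  have "\<not> (lt le\<^sub>N (Inr (b, c)) z \<and> lt le\<^sub>N z (Inl c))" if "z \<in> V\<^sub>N" for z
    using SN_eq_Inl_if_squeezed[OF that \<open>c \<in> V\<close>] unfolding SN_lt_iff by auto
  then show "covers V\<^sub>N le\<^sub>N (Inr (b, c)) (Inl y)"
    using bc \<open>c \<in> V\<close> poset_refl unfolding covers_def SN_lt_iff by auto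
qed

lemma SN_not_covers_Inr_Inr: "\<not> covers V\<^sub>N le\<^sub>N (Inr e) (Inr e')"
proof
  assume cov: "covers V\<^sub>N le\<^sub>N (Inr e) (Inr e')"
  obtain b c where e: "e = (b, c)" by fastforce
  have "c \<in> V"
    using cov e unfolding covers_def by (auto dest!: Ndiag_covers coversD)
  then have "\<not> (lt le\<^sub>N (Inr e) (Inl c) \<and> lt le\<^sub>N (Inl c) (Inr e'))"
    using cov unfolding covers_def by auto
  then show False
    using cov e \<open>c \<in> V\<close> poset_refl[of c] unfolding covers_def SN_lt_iff by auto
qed

definition lower_lift :: "'a \<Rightarrow> 'a \<Rightarrow> 'a + 'a \<times> 'a" where
  "lower_lift a c = (if (a, c) \<in> Ndiag V le then Inr (a, c) else Inl a)"

definition upper_lift :: "'a \<Rightarrow> 'a \<Rightarrow> 'a + 'a \<times> 'a" where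
  "upper_lift b d = (if (b, d) \<in> Ndiag V le then Inr (b, d) else Inl d)"

lemma SN_lower_cover_of_Inl_iff:
  "covers V\<^sub>N le\<^sub>N u (Inl c) \<longleftrightarrow> (\<exists>a. covers V le a c \<and> u = lower_lift a c)"
proof (cases u)
  case (Inr e)
  then show ?thesis
    using SN_covers_Inr_Inl_iff unfolding lower_lift_def by (cases e) (auto intro: Ndiag_covers)
qed (auto simp: SN_covers_Inl_Inl_iff lower_lift_def)

lemma SN_upper_cover_of_Inl_iff:
  "covers V\<^sub>N le\<^sub>N (Inl b) v \<longleftrightarrow> (\<exists>d. covers V le b d \<and> v = upper_lift b d)"
proof (cases v)
  case (Inr e)
  then show ?thesis
    using SN_covers_Inl_Inr_iff unfolding upper_lift_def by (cases e) (auto intro: Ndiag_covers)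
qed (auto simp: SN_covers_Inl_Inl_iff upper_lift_def)

lemma SN_upper_cover_of_Inr: "covers V\<^sub>N le\<^sub>N (Inr (b, c)) v \<Longrightarrow> v = Inl c"
  using SN_covers_Inr_Inl_iff SN_not_covers_Inr_Inr by (cases v) auto

lemma SN_lower_cover_of_Inr: "covers V\<^sub>N le\<^sub>N u (Inr (b, c)) \<Longrightarrow> u = Inl b"
  using SN_covers_Inl_Inr_iff SN_not_covers_Inr_Inr by (cases u) auto

lemma SN_NdiagE:
  assumes "(u, v) \<in> Ndiag V\<^sub>N le\<^sub>N"
  obtains b c where "u = Inl b" "v = Inl c"
proof -
  obtain a' d' where N: "is_N V\<^sub>N le\<^sub>N a' u v d'"
    using assms unfolding Ndiag_def by blast
  then have cov: "covers V\<^sub>N le\<^sub>N u v" "covers V\<^sub>N le\<^sub>N a' v" "covers V\<^sub>N le\<^sub>N u d'"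
    unfolding is_N_def by auto
  have "u \<noteq> Inr (b, c)" for b c
    using SN_upper_cover_of_Inr cov(1,3) is_N_distinct[OF N] by metis
  moreover have "v \<noteq> Inr (b, c)" for b c
    using SN_lower_cover_of_Inr cov(1,2) is_N_distinct[OF N] by metis
  ultimately show ?thesis
    using that by (metis prod.exhaust sum.exhaust)
qed

lemma A_set_if_SN_Ndiag:
  assumes "(Inl \<beta>, Inl \<gamma>) \<in> Ndiag V\<^sub>N le\<^sub>N"
  shows "(\<beta>, \<gamma>) \<in> A_set V le"
proof -
  obtain a' d' where N: "is_N V\<^sub>N le\<^sub>N a' (Inl \<beta>) (Inl \<gamma>) d'"
    using assms unfolding Ndiag_def by blast
  then have \<beta>\<gamma>: "covers V le \<beta> \<gamma>" "(\<beta>, \<gamma>) \<notin> Ndiag V le"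
    unfolding is_N_def SN_covers_Inl_Inl_iff by auto
  obtain \<alpha> where \<alpha>\<gamma>: "covers V le \<alpha> \<gamma>" and a': "a' = lower_lift \<alpha> \<gamma>"
    using N unfolding is_N_def SN_lower_cover_of_Inl_iff by blast
  obtain \<delta> where \<beta>\<delta>: "covers V le \<beta> \<delta>" and d': "d' = upper_lift \<beta> \<delta>"
    using N unfolding is_N_def SN_upper_cover_of_Inl_iff by blast
  have "\<alpha> \<noteq> \<beta>" "\<gamma> \<noteq> \<delta>"
    using is_N_distinct[OF N] a' d' \<beta>\<gamma>(2) unfolding lower_lift_def upper_lift_def by auto
  then have inc: "(\<alpha>, \<beta>) \<in> Inc V le" "(\<gamma>, \<delta>) \<in> Inc V le"
    using covers_common_upper_Inc[OF \<alpha>\<gamma> \<beta>\<gamma>(1)] covers_common_lower_Inc[OF \<beta>\<gamma>(1) \<beta>\<delta>] by auto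
  have "(\<alpha>, \<gamma>) \<in> Ndiag V le \<or> (\<beta>, \<delta>) \<in> Ndiag V le"
  proof (rule ccontr)
    assume "\<not> ?thesis"
    then have "a' = Inl \<alpha>" "d' = Inl \<delta>"
      using a' d' unfolding lower_lift_def upper_lift_def by auto
    moreover have "(a', d') \<in> Inc V\<^sub>N le\<^sub>N"
      using N unfolding is_N_def by blast
    ultimately have "(\<alpha>, \<delta>) \<in> Inc V le"
      unfolding SN_Inc_iff by (auto simp: Inc_def)
    then have "is_N V le \<alpha> \<beta> \<gamma> \<delta>"
      using \<alpha>\<gamma> \<beta>\<gamma> \<beta>\<delta> unfolding is_N_def by blast
    with \<beta>\<gamma>(2) show False
      unfolding Ndiag_def by blast
  qed
  with \<alpha>\<gamma> \<beta>\<gamma> \<beta>\<delta> inc show ?thesis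
    unfolding A_set_def Diag_def by (auto dest!: coversD simp: lt_def)
qed

lemma is_N_SN_lifts:
  assumes "covers V le \<beta> \<gamma>" "(\<beta>, \<gamma>) \<notin> Ndiag V le" "covers V le a \<gamma>" "covers V le \<beta> d"
    and "(lower_lift a \<gamma>, upper_lift \<beta> d) \<in> Inc V\<^sub>N le\<^sub>N"
  shows "is_N V\<^sub>N le\<^sub>N (lower_lift a \<gamma>) (Inl \<beta>) (Inl \<gamma>) (upper_lift \<beta> d)"
proof -
  have "covers V\<^sub>N le\<^sub>N (lower_lift a \<gamma>) (Inl \<gamma>)"
    using assms(3) SN_lower_cover_of_Inl_iff by blast
  moreover have "covers V\<^sub>N le\<^sub>N (Inl \<beta>) (upper_lift \<beta> d)"
    using assms(4) SN_upper_cover_of_Inl_iff by blast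
  ultimately show ?thesis
    using assms(1,2,5) SN_covers_Inl_Inl_iff unfolding is_N_def by blast
qed

lemma SN_Ndiag_if_A_set:
  assumes "finite V" "(\<beta>, \<gamma>) \<in> A_set V le"
  shows "(Inl \<beta>, Inl \<gamma>) \<in> Ndiag V\<^sub>N le\<^sub>N"
proof -
  obtain \<alpha> \<delta> where \<beta>\<gamma>: "covers V le \<beta> \<gamma>" "(\<beta>, \<gamma>) \<notin> Ndiag V le"
    and \<alpha>\<delta>: "\<alpha> \<in> V" "\<delta> \<in> V" "lt le \<alpha> \<gamma>" "lt le \<beta> \<delta>"
    and inc: "(\<alpha>, \<beta>) \<in> Inc V le" "(\<gamma>, \<delta>) \<in> Inc V le"
    and diag: "(\<alpha>, \<gamma>) \<in> Ndiag V le \<or> (\<beta>, \<delta>) \<in> Ndiag V le"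
    using assms(2) unfolding A_set_def Diag_def by blast
  have \<beta>\<gamma>_V: "\<beta> \<in> V" "\<gamma> \<in> V" "le \<beta> \<gamma>" "\<beta> \<noteq> \<gamma>"
    using coversD[OF \<beta>\<gamma>(1)] by auto
  have "\<exists>a d. covers V le a \<gamma> \<and> covers V le \<beta> d \<and> (lower_lift a \<gamma>, upper_lift \<beta> d) \<in> Inc V\<^sub>N le\<^sub>N"
    using diag
  proof
    assume \<alpha>\<gamma>: "(\<alpha>, \<gamma>) \<in> Ndiag V le"
    obtain d where \<beta>d: "covers V le \<beta> d" "le d \<delta>"
      using exists_cover_above[OF assms(1) \<beta>\<gamma>_V(1) \<alpha>\<delta>(2,4)] by blast
    have d_V: "d \<in> V" "le \<beta> d"
      using coversD[OF \<beta>d(1)] by auto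
    have "\<not> le \<gamma> d"
      using poset_trans[of \<gamma> d \<delta>] \<beta>d(2) d_V \<beta>\<gamma>_V \<alpha>\<delta>(2) inc(2) unfolding Inc_def by blast
    moreover have "\<not> le d \<alpha>"
      using poset_trans[of \<beta> d \<alpha>] d_V \<beta>\<gamma>_V \<alpha>\<delta>(1) inc(1) unfolding Inc_def by blast
    moreover have "\<not> le \<gamma> \<beta>"
      using poset_antisym[of \<beta> \<gamma>] \<beta>\<gamma>_V by blast
    moreover have "\<alpha> \<noteq> \<beta>"
      using inc \<beta>\<gamma>_V poset_refl unfolding Inc_def by blast
    ultimately have "(lower_lift \<alpha> \<gamma>, upper_lift \<beta> d) \<in> Inc V\<^sub>N le\<^sub>N"
      using \<alpha>\<gamma> \<beta>d(1) d_V \<beta>\<gamma>_V unfolding SN_Inc_iff lower_lift_def upper_lift_def by auto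
    then show ?thesis
      using Ndiag_covers[OF \<alpha>\<gamma>] \<beta>d(1) by blast
  next
    assume \<beta>\<delta>: "(\<beta>, \<delta>) \<in> Ndiag V le"
    obtain a where a\<gamma>: "covers V le a \<gamma>" "le \<alpha> a"
      using exists_cover_below[OF assms(1) \<alpha>\<delta>(1) \<beta>\<gamma>_V(2) \<alpha>\<delta>(3)] by blast
    have a_V: "a \<in> V" "le a \<gamma>"
      using coversD[OF a\<gamma>(1)] by auto
    have "\<not> le a \<beta>"
      using poset_trans[of \<alpha> a \<beta>] a\<gamma>(2) a_V \<beta>\<gamma>_V \<alpha>\<delta>(1) inc(1) unfolding Inc_def by blast
    moreover have "\<not> le \<delta> a"
      using poset_trans[of \<delta> a \<gamma>] a_V \<beta>\<gamma>_V \<alpha>\<delta>(2) inc(2) unfolding Inc_def by blast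
    moreover have "\<not> le \<gamma> \<beta>"
      using poset_antisym[of \<beta> \<gamma>] \<beta>\<gamma>_V by blast
    moreover have "a \<noteq> \<beta>"
      using inc a\<gamma>(2) unfolding Inc_def by blast
    ultimately have "(lower_lift a \<gamma>, upper_lift \<beta> \<delta>) \<in> Inc V\<^sub>N le\<^sub>N"
      using \<beta>\<delta> a_V \<beta>\<gamma>_V coversD[OF Ndiag_covers[OF \<beta>\<delta>]]
      unfolding SN_Inc_iff lower_lift_def upper_lift_def by auto
    then show ?thesis
      using Ndiag_covers[OF \<beta>\<delta>] a\<gamma>(1) by blast
  qed
  then show ?thesis
    using is_N_SN_lifts[OF \<beta>\<gamma>] unfolding Ndiag_def by blast
qed

end

theorem lemma3:
  fixes V :: "'a set" and le :: "'a \<Rightarrow> 'a \<Rightarrow> bool"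
  assumes "finite V" and "poset_on V le"
  shows "Ndiag (SN_carrier V le) (SN_le V le) = (\<lambda>(b, c). (Inl b, Inl c)) ` A_set V le"
proof -
  interpret poset V le
    using assms(2) by (rule poset.intro)
  have "(u, v) \<in> Ndiag V\<^sub>N le\<^sub>N \<longleftrightarrow> (\<exists>b c. u = Inl b \<and> v = Inl c \<and> (b, c) \<in> A_set V le)"
    for u v
    using SN_NdiagE A_set_if_SN_Ndiag SN_Ndiag_if_A_set[OF assms(1)] by metis
  then show ?thesis
    by auto
qed

end
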